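(* Let $n\ge 4$, let $a_1,\dots,a_n$ be real numbers, $C(t)=\sum_{j=1}^n a_j\cos jt$, $S(t)=\sum_{j=1}^n a_j\sin jt$. Let $m$ be an integer with $2\le m\le n/2$, let $t_1,\dots,t_m\in(0,\pi)$ be pairwise distinct, and suppose there are real numbers $b_m,\dots,b_{n-m}$ such that for all real $t$ $$S(t)=\prod_{j=1}^m(\cos t-\cos t_j)\cdot\sum_{k=m}^{n-m}b_k\sin kt .$$ Then $C(t_1)=C(t_2)=\dots=C(t_m)$. *)

theory Defs
  imports Complex_Main
begin

end

theory Submission
  imports Defs "HOL-Computational_Algebra.Polynomial"
begin

text \<open>
  Put \<open>z = e\<^sup>i\<^sup>t\<close>. Since \<open>(cos t - x) z = (z\<^sup>2 - 2 x z + 1) / 2\<close> and \<open>k \<ge> m\<close>, the function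
  \<open>G(t) = \<Prod>\<^sub>j (cos t - cos t\<^sub>j) \<Sum>\<^sub>k b\<^sub>k z\<^sup>k\<close> equals \<open>Q(z)\<close> for a real polynomial \<open>Q\<close> of
  degree at most \<open>n\<close>. The imaginary part of \<open>Q(z)\<close> is the sine sum of the coefficients
  \<open>q\<^sub>1, \<dots>, q\<^sub>n\<close> and equals \<open>S(t)\<close>, so by uniqueness of sine coefficients \<open>q\<^sub>j = a\<^sub>j\<close> for
  \<open>j \<ge> 1\<close>. The real part then gives \<open>q\<^sub>0 + C(t) = Re G(t)\<close>, which vanishes at every \<open>t\<^sub>i\<close>;
  hence \<open>C(t\<^sub>i) = -q\<^sub>0\<close> for all \<open>i\<close>.
\<close>

lemma sin_sum_shift:
  "(\<Sum>j\<in>A. e j * sin (real j * (t + h))) + (\<Sum>j\<in>A. e j * sin (real j * (t - h)))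
     = (\<Sum>j\<in>A. 2 * cos (real j * h) * e j * sin (real j * t))"
  by (simp add: sum.distrib[symmetric] distrib_left right_diff_distrib sin_add sin_diff algebra_simps)

lemma sin_sum_eq_0_imp_coeff_0:
  assumes "\<And>t::real. (\<Sum>j=1..N. e j * sin (real j * t)) = 0" and "j \<in> {1..N}"
  shows "e j = 0"
  using assms
proof (induction N arbitrary: e j)
  case 0
  then show ?case by simp
next
  case (Suc N)
  define h where "h = pi / real (Suc N)"
  define e' where "e' j = 2 * (cos (real j * h) + 1) * e j" for j
  \<comment> \<open>\<open>f(t + h) + f(t - h) + 2 f(t)\<close> loses the top frequency, since \<open>cos ((N + 1) h) = -1\<close>.\<close>
  have reduced: "(\<Sum>j=1..N. e' j * sin (real j * t)) = 0" for t
  proof -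
    have "(\<Sum>j=1..Suc N. e' j * sin (real j * t))
        = (\<Sum>j=1..Suc N. 2 * cos (real j * h) * e j * sin (real j * t))
          + 2 * (\<Sum>j=1..Suc N. e j * sin (real j * t))"
      by (simp add: e'_def sum.distrib sum_distrib_left algebra_simps)
    also have "\<dots> = (\<Sum>j=1..Suc N. e j * sin (real j * (t + h)))
          + (\<Sum>j=1..Suc N. e j * sin (real j * (t - h))) + 2 * (\<Sum>j=1..Suc N. e j * sin (real j * t))"
      by (simp only: sin_sum_shift)
    also have "\<dots> = 0"
      using Suc.prems(1) by simp
    finally show ?thesis
      by (simp add: e'_def h_def)
  qed
  have lower: "e i = 0" if "i \<in> {1..N}" for i
  proof -
    have "real i * pi < real (Suc N) * pi"
      using that by (intro mult_strict_right_mono) auto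
    then have "cos pi < cos (real i * h)"
      by (intro cos_monotone_0_pi) (auto simp: h_def field_simps)
    moreover have "e' i = 0"
      using Suc.IH reduced that by blast
    ultimately show ?thesis
      by (simp add: e'_def)
  qed
  have "(\<Sum>j=1..Suc N. e j * sin (real j * (pi / (2 * real (Suc N))))) = 0"
    using Suc.prems(1) by blast
  moreover have "real (Suc N) * (pi / (2 * real (Suc N))) = pi / 2"
    by (simp del: of_nat_Suc add: field_simps)
  ultimately have "e (Suc N) * sin (pi / 2) = 0"
    using lower by (simp del: of_nat_Suc)
  then show ?case
    using lower Suc.prems(2) by (auto simp: le_Suc_eq)
qed

lemma sin_sum_coeffs_unique:
  assumes "\<And>t::real. (\<Sum>j=1..N. a j * sin (real j * t)) = (\<Sum>j=1..N. c j * sin (real j * t))"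
    and "j \<in> {1..N}"
  shows "a j = c j"
proof -
  have "(\<Sum>j=1..N. (a j - c j) * sin (real j * t)) = 0" for t
    using assms(1)[of t] by (simp add: left_diff_distrib sum_subtractf)
  then show ?thesis
    using sin_sum_eq_0_imp_coeff_0 assms(2) by fastforce
qed

lemma map_poly_of_real_mult:
  "map_poly (of_real :: real \<Rightarrow> 'a::{comm_ring_1,real_algebra_1}) (p * q) = map_poly of_real p * map_poly of_real q"
  by (rule poly_eqI) (simp add: coeff_map_poly coeff_mult)

lemma map_poly_of_real_prod:
  "map_poly (of_real :: real \<Rightarrow> 'a::{comm_ring_1,real_algebra_1}) (\<Prod>i\<in>A. f i) = (\<Prod>i\<in>A. map_poly of_real (f i))"
  by (induction A rule: infinite_finite_induct) (auto simp: map_poly_of_real_mult)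

lemma map_poly_of_real_sum:
  "map_poly (of_real :: real \<Rightarrow> 'a::{comm_ring_1,real_algebra_1}) (\<Sum>i\<in>A. f i) = (\<Sum>i\<in>A. map_poly of_real (f i))"
  by (rule poly_eqI) (simp add: coeff_map_poly coeff_sum)

lemma poly_of_real_cis:
  assumes "degree p \<le> N"
  shows "poly (map_poly complex_of_real p) (cis t) = (\<Sum>j\<le>N. of_real (coeff p j) * cis t ^ j)"
proof -
  have "poly (map_poly complex_of_real p) (cis t) = (\<Sum>j\<le>degree p. of_real (coeff p j) * cis t ^ j)"
    by (simp add: poly_altdef degree_map_poly coeff_map_poly)
  also have "\<dots> = (\<Sum>j\<le>N. of_real (coeff p j) * cis t ^ j)"
    using assms by (intro sum.mono_neutral_left) (auto simp: coeff_eq_0)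
  finally show ?thesis .
qed

lemma Re_poly_of_real_cis:
  assumes "degree p \<le> N"
  shows "Re (poly (map_poly complex_of_real p) (cis t))
           = coeff p 0 + (\<Sum>j=1..N. coeff p j * cos (real j * t))"
  by (simp add: poly_of_real_cis[OF assms] DeMoivre atMost_atLeast0 sum.atLeast_Suc_atMost)

lemma Im_poly_of_real_cis:
  assumes "degree p \<le> N"
  shows "Im (poly (map_poly complex_of_real p) (cis t)) = (\<Sum>j=1..N. coeff p j * sin (real j * t))"
  by (simp add: poly_of_real_cis[OF assms] DeMoivre atMost_atLeast0 sum.atLeast_Suc_atMost)

lemma poly_cos_factor_cis:
  "poly (map_poly complex_of_real [:1/2, - x, 1/2:]) (cis t) = of_real (cos t - x) * cis t"
  by (simp add: map_poly_pCons complex_eq_iff algebra_simps power2_eq_square)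
     (simp add: sin_squared_eq[unfolded power2_eq_square] field_simps)

lemma poly_cos_product_cis:
  assumes "\<forall>k\<in>K. card A \<le> k"
  shows "poly (map_poly complex_of_real
             ((\<Prod>j\<in>A. [:1/2, - x j, 1/2:]) * (\<Sum>k\<in>K. monom (b k) (k - card A)))) (cis t)
           = of_real (\<Prod>j\<in>A. cos t - x j) * (\<Sum>k\<in>K. of_real (b k) * cis t ^ k)"
proof -
  have "cis t ^ card A * (\<Sum>k\<in>K. of_real (b k) * cis t ^ (k - card A))
          = (\<Sum>k\<in>K. of_real (b k) * cis t ^ k)"
    unfolding sum_distrib_left
    by (intro sum.cong refl) (use assms in \<open>simp add: power_add[symmetric]\<close>)
  then show ?thesis
    by (simp add: map_poly_of_real_mult map_poly_of_real_prod map_poly_of_real_sum poly_prod poly_sum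
        map_poly_monom poly_monom poly_cos_factor_cis prod.distrib mult.assoc)
qed

lemma degree_cos_product_le:
  fixes x :: "'i \<Rightarrow> real" and b :: "nat \<Rightarrow> real"
  assumes "\<forall>k\<in>K. card A \<le> k \<and> k + card A \<le> N"
  shows "degree ((\<Prod>j\<in>A. [:1/2, - x j, 1/2:]) * (\<Sum>k\<in>K. monom (b k) (k - card A))) \<le> N"
proof -
  have "degree (\<Prod>j\<in>A. [:1/2, - x j, 1/2:]) \<le> 2 * card A"
  proof (cases "finite A")
    case True
    then show ?thesis
      using degree_prod_sum_le[OF True, of "\<lambda>j. [:1/2, - x j, 1/2:]"] by simp
  qed simp
  moreover have "degree (\<Sum>k\<in>K. monom (b k) (k - card A)) \<le> N - 2 * card A"
    using assms by (cases "finite K") (auto intro!: degree_sum_le order.trans[OF degree_monom_le])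
  moreover have "K \<noteq> {} \<Longrightarrow> 2 * card A \<le> N"
    using assms by fastforce
  ultimately show ?thesis
    using degree_mult_le[of "\<Prod>j\<in>A. [:1/2, - x j, 1/2:]" "\<Sum>k\<in>K. monom (b k) (k - card A)"]
    by (cases "K = {}") auto
qed

theorem lemma5:
  fixes n m :: nat and a tt b :: "nat \<Rightarrow> real"
  assumes "n \<ge> 4"
    and "2 \<le> m" and "2 * m \<le> n"
    and "\<forall>j\<in>{1..m}. 0 < tt j \<and> tt j < pi"
    and "inj_on tt {1..m}"
    and "\<forall>t::real. (\<Sum>j=1..n. a j * sin (real j * t)) =
           (\<Prod>j=1..m. cos t - cos (tt j)) * (\<Sum>k=m..n-m. b k * sin (real k * t))"
  shows "\<forall>i\<in>{1..m}. \<forall>j\<in>{1..m}.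
           (\<Sum>k=1..n. a k * cos (real k * tt i)) = (\<Sum>k=1..n. a k * cos (real k * tt j))"
proof -
  define Q where "Q = (\<Prod>j\<in>{1..m}. [:1/2, - cos (tt j), 1/2:]) * (\<Sum>k\<in>{m..n-m}. monom (b k) (k - m))"
  have "\<forall>k\<in>{m..n-m}. card {1..m} \<le> k \<and> k + card {1..m} \<le> n"
    using assms(3) by auto
  then have deg: "degree Q \<le> n"
    unfolding Q_def
    using degree_cos_product_le[where K = "{m..n-m}" and A = "{1..m}" and x = "\<lambda>j. cos (tt j)"]
    by simp
  have Q_cis: "poly (map_poly complex_of_real Q) (cis t)
      = of_real (\<Prod>j=1..m. cos t - cos (tt j)) * (\<Sum>k=m..n-m. of_real (b k) * cis t ^ k)" for t
    unfolding Q_def using poly_cos_product_cis[where K = "{m..n-m}" and A = "{1..m}"] by simp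
  have "(\<Sum>j=1..n. a j * sin (real j * t)) = (\<Sum>j=1..n. coeff Q j * sin (real j * t))" for t
    using arg_cong[OF Q_cis[of t], of Im] assms(6)
    by (simp add: Im_poly_of_real_cis[OF deg] DeMoivre sum_distrib_left del: of_real_prod)
  then have a_coeff: "j \<in> {1..n} \<Longrightarrow> a j = coeff Q j" for j
    by (rule sin_sum_coeffs_unique)
  have "(\<Sum>k=1..n. a k * cos (real k * tt i)) = - coeff Q 0" if "i \<in> {1..m}" for i
  proof -
    have vanish: "(\<Prod>j=1..m. cos (tt i) - cos (tt j)) = 0"
      using that by (intro prod_zero) auto
    have "Re (poly (map_poly complex_of_real Q) (cis (tt i))) = 0"
      unfolding Q_cis vanish by simp
    then show ?thesis
      using a_coeff by (simp add: Re_poly_of_real_cis[OF deg])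
  qed
  then show ?thesis
    by simp
qed

end
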